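(* Let $d\ge4$ and $\alpha\in(0,\frac12)$ with $(d+1)\alpha\in\mathbb{Z}$. Let $e$ span the kernel of $Q_\alpha$ on $\mathbb{C}^{\mathcal A_d}$, let $SU^*(Q_\alpha)$ be the group of linear automorphisms of $\mathbb{C}^{\mathcal A_d}$ of determinant $1$ that preserve $Q_\alpha$ and fix $e$, and let $D$ be the subgroup of $SU^*(Q_\alpha)$ consisting of the elements that map the hyperplane $H_{1-d}=\mathrm{span}\{e_q:q\ne 1-d\}$ into itself. Then any subgroup of $SU^*(Q_\alpha)$ containing $D$ is equal to $D$ or to $SU^*(Q_\alpha)$.
   Context: $\mathcal A_d=\{1-d,3-d,\dots,d-1\}$, $(e_q)_{q\in\mathcal A_d}$ the canonical basis of $\mathbb{C}^{\mathcal A_d}$, $\zeta=e^{-2\pi i\alpha}$. $Q_\alpha$ is the hermitian form on $\mathbb{C}^{\mathcal A_d}$ (linear in the first argument, conjugate-linear in the second) with $Q_\alpha(e_p,e_p)=1$ and $Q_\alpha(e_p,e_{p'})=(1+\zeta)^{-1}=\frac12(1+i\tan\pi\alpha)$ for $p>p'$. Under the hypothesis $(d+1)\alpha\in\mathbb{Z}$, the kernel of $Q_\alpha$ is one-dimensional and is not contained in $H_{1-d}$, so in the basis $(e,e_{3-d},\dots,e_{d-1})$ elements of $SU^*(Q_\alpha)$ have block form $\begin{pmatrix}1&v\\0&g\end{pmatrix}$, and $D$ consists of those with $v=0$. *)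

theory Defs
  imports "Jordan_Normal_Form.Determinant" "HOL-Algebra.Group"
begin

text \<open>The index set A_d = {1-d, 3-d, ..., d-1} is enumerated increasingly by
  k = 0..d-1 via q = 2k+1-d. So C^{A_d} is carrier_vec d, index 0 is q = 1-d,
  and p > p' in A_d iff the corresponding indices satisfy k > k'.\<close>

definition zeta :: "real \<Rightarrow> complex" where
  "zeta \<alpha> = exp (- 2 * pi * \<i> * complex_of_real \<alpha>)"

definition gramQ :: "real \<Rightarrow> nat \<Rightarrow> nat \<Rightarrow> complex" where
  "gramQ \<alpha> i j = (if i = j then 1
                   else if i > j then 1 / (1 + zeta \<alpha>)
                   else cnj (1 / (1 + zeta \<alpha>)))"

definition Qform :: "nat \<Rightarrow> real \<Rightarrow> complex vec \<Rightarrow> complex vec \<Rightarrow> complex" where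
  "Qform d \<alpha> x y = (\<Sum>i<d. \<Sum>j<d. x $ i * cnj (y $ j) * gramQ \<alpha> i j)"

definition kerQ :: "nat \<Rightarrow> real \<Rightarrow> complex vec set" where
  "kerQ d \<alpha> = {x \<in> carrier_vec d. \<forall>y \<in> carrier_vec d. Qform d \<alpha> x y = 0}"

definition SUstar :: "nat \<Rightarrow> real \<Rightarrow> complex vec \<Rightarrow> complex mat set" where
  "SUstar d \<alpha> e = {g \<in> carrier_mat d d. det g = 1
       \<and> (\<forall>x \<in> carrier_vec d. \<forall>y \<in> carrier_vec d. Qform d \<alpha> (g *\<^sub>v x) (g *\<^sub>v y) = Qform d \<alpha> x y)
       \<and> g *\<^sub>v e = e}"

definition hypH :: "nat \<Rightarrow> complex vec set" where
  "hypH d = {x \<in> carrier_vec d. x $ 0 = 0}"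

definition Dgrp :: "nat \<Rightarrow> real \<Rightarrow> complex vec \<Rightarrow> complex mat set" where
  "Dgrp d \<alpha> e = {g \<in> SUstar d \<alpha> e. \<forall>x \<in> hypH d. g *\<^sub>v x \<in> hypH d}"

definition SUstar_group :: "nat \<Rightarrow> real \<Rightarrow> complex vec \<Rightarrow> complex mat monoid" where
  "SUstar_group d \<alpha> e = \<lparr>carrier = SUstar d \<alpha> e, mult = (*), one = 1\<^sub>m d\<rparr>"

end

theory Submission
  imports Defs "HOL-Real_Asymp.Real_Asymp"
begin

text \<open>The radical of \<open>Q\<close> is the line through \<open>e\<close>, and \<open>e\<close> has nonzero first coordinate, so \<open>Q\<close> is
  nondegenerate on \<open>H = H\<^sub>1\<^sub>-\<^sub>d\<close>. The Eichler transformations \<open>N\<^sub>y : x \<mapsto> x + Q(x,y) e\<close> lie in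
  \<open>SU\<^sup>*(Q)\<close> and satisfy \<open>N\<^sub>y N\<^sub>z = N\<^sub>y\<^sub>+\<^sub>z\<close> and \<open>k N\<^sub>y k\<^sup>-\<^sup>1 = N\<^sub>k\<^sub>y\<close>, and every element of \<open>SU\<^sup>*(Q)\<close>
  is some \<open>N\<^sub>y\<close> times an element of \<open>D\<close>. Hence a subgroup \<open>G \<supseteq> D\<close> is determined by the
  \<open>D\<close>-invariant additive group \<open>Y = {y. N\<^sub>y \<in> G}\<close>, which contains a nonzero vector of \<open>H\<close>
  unless \<open>G = D\<close>. Applying products of two complex reflections in orthogonal anisotropic
  vectors of \<open>H\<close> (these lie in \<open>D\<close>) to such a vector shows that \<open>Y\<close> contains a complex line,
  and then all of \<open>H\<close>; so \<open>G = SU\<^sup>*(Q)\<close>. The hypothesis \<open>(d+1)\<alpha> \<in> \<int>\<close> only serves to make the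
  kernel of \<open>Q\<close> one-dimensional, which is assumed explicitly.\<close>

section \<open>The hermitian form\<close>

lemma gramQ_swap: "gramQ \<alpha> j i = cnj (gramQ \<alpha> i j)"
  unfolding gramQ_def by auto

lemma Qform_swap: "Qform d \<alpha> x y = cnj (Qform d \<alpha> y x)"
proof -
  have "cnj (Qform d \<alpha> y x) = (\<Sum>i<d. \<Sum>j<d. cnj (y $ i * cnj (x $ j) * gramQ \<alpha> i j))"
    unfolding Qform_def by simp
  also have "\<dots> = (\<Sum>j<d. \<Sum>i<d. cnj (y $ i * cnj (x $ j) * gramQ \<alpha> i j))"
    by (rule sum.swap)
  also have "\<dots> = Qform d \<alpha> x y"
    unfolding Qform_def
  proof (intro sum.cong refl)
    fix i j
    show "cnj (y $ i * cnj (x $ j) * gramQ \<alpha> i j) = x $ j * cnj (y $ i) * gramQ \<alpha> j i"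
      using gramQ_swap[of \<alpha> j i] by simp
  qed
  finally show ?thesis by simp
qed

lemma cnj_Qform_self: "cnj (Qform d \<alpha> x x) = Qform d \<alpha> x x"
  using Qform_swap[of d \<alpha> x x] by simp

lemma Qform_add_left:
  assumes "x \<in> carrier_vec d" "y \<in> carrier_vec d"
  shows "Qform d \<alpha> (x + y) z = Qform d \<alpha> x z + Qform d \<alpha> y z"
  unfolding Qform_def sum.distrib[symmetric] using assms
  by (intro sum.cong refl) (simp add: distrib_right)

lemma Qform_smult_left:
  assumes "x \<in> carrier_vec d"
  shows "Qform d \<alpha> (c \<cdot>\<^sub>v x) z = c * Qform d \<alpha> x z"
  unfolding Qform_def sum_distrib_left using assms
  by (intro sum.cong refl) (simp add: mult.assoc)

lemma Qform_add_right:
  assumes "x \<in> carrier_vec d" "y \<in> carrier_vec d"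
  shows "Qform d \<alpha> z (x + y) = Qform d \<alpha> z x + Qform d \<alpha> z y"
  using Qform_add_left[OF assms, of \<alpha> z] Qform_swap[of d \<alpha> z] by simp

lemma Qform_smult_right:
  assumes "x \<in> carrier_vec d"
  shows "Qform d \<alpha> z (c \<cdot>\<^sub>v x) = cnj c * Qform d \<alpha> z x"
  using Qform_smult_left[OF assms, of \<alpha> c z] Qform_swap[of d \<alpha> z] by simp

lemma Qform_diff_left:
  assumes "x \<in> carrier_vec d" "y \<in> carrier_vec d"
  shows "Qform d \<alpha> (x - y) z = Qform d \<alpha> x z - Qform d \<alpha> y z"
proof -
  have "x - y = x + (-1) \<cdot>\<^sub>v y" using assms by auto
  thus ?thesis using assms by (simp add: Qform_add_left Qform_smult_left)
qed

lemma Qform_diff_right: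
  assumes "x \<in> carrier_vec d" "y \<in> carrier_vec d"
  shows "Qform d \<alpha> z (x - y) = Qform d \<alpha> z x - Qform d \<alpha> z y"
  using Qform_diff_left[OF assms, of \<alpha> z] Qform_swap[of d \<alpha> z] by simp

lemma Qform_zero_right [simp]: "Qform d \<alpha> z (0\<^sub>v d) = 0"
  unfolding Qform_def by simp

lemma Qform_unit_vec_left:
  assumes "j < d"
  shows "Qform d \<alpha> (unit_vec d j) y = (\<Sum>l<d. cnj (y $ l) * gramQ \<alpha> j l)"
proof -
  have "Qform d \<alpha> (unit_vec d j) y = (\<Sum>i<d. \<Sum>l<d. if i = j then cnj (y $ l) * gramQ \<alpha> i l else 0)"
    unfolding Qform_def using assms by (intro sum.cong refl) auto
  also have "\<dots> = (\<Sum>l<d. cnj (y $ l) * gramQ \<alpha> j l)"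
    by (subst sum.swap) (simp add: assms)
  finally show ?thesis .
qed

lemma Qform_unit_vec_right:
  assumes "x \<in> carrier_vec d" "j < d"
  shows "Qform d \<alpha> x (unit_vec d j) = (\<Sum>i<d. x $ i * gramQ \<alpha> i j)"
proof -
  have "Qform d \<alpha> x (unit_vec d j) = (\<Sum>i<d. \<Sum>l<d. if l = j then x $ i * gramQ \<alpha> i l else 0)"
    unfolding Qform_def using assms by (intro sum.cong refl) auto
  thus ?thesis using assms by simp
qed

lemma Qform_expand_left:
  assumes "x \<in> carrier_vec d"
  shows "Qform d \<alpha> x y = (\<Sum>j<d. x $ j * Qform d \<alpha> (unit_vec d j) y)"
proof -
  have "(\<Sum>j<d. x $ j * Qform d \<alpha> (unit_vec d j) y) = (\<Sum>j<d. x $ j * (\<Sum>l<d. cnj (y $ l) * gramQ \<alpha> j l))"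
    by (intro sum.cong refl) (simp add: Qform_unit_vec_left)
  also have "\<dots> = Qform d \<alpha> x y"
    unfolding Qform_def sum_distrib_left by (simp add: mult.assoc)
  finally show ?thesis by simp
qed

lemma Qform_cnj_vec_right:
  "Qform d \<alpha> x (vec d (\<lambda>j. cnj (w $ j))) = (\<Sum>i<d. x $ i * (\<Sum>j<d. gramQ \<alpha> i j * w $ j))"
  unfolding Qform_def sum_distrib_left
  by (intro sum.cong refl) (simp add: mult.commute mult.left_commute)

lemma Qform_totally_isotropic:
  assumes V: "V \<subseteq> carrier_vec d"
    and add: "\<And>v w. v \<in> V \<Longrightarrow> w \<in> V \<Longrightarrow> v + w \<in> V"
    and smult_i: "\<And>v. v \<in> V \<Longrightarrow> \<i> \<cdot>\<^sub>v v \<in> V"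
    and isotropic: "\<And>v. v \<in> V \<Longrightarrow> Qform d \<alpha> v v = 0"
    and p: "p \<in> V" and q: "q \<in> V"
  shows "Qform d \<alpha> p q = 0"
proof -
  let ?Q = "Qform d \<alpha>"
  have pc: "p \<in> carrier_vec d" and qc: "q \<in> carrier_vec d" using p q V by auto
  have qp: "?Q q p = cnj (?Q p q)" by (rule Qform_swap)
  have "?Q (p + q) (p + q) = ?Q p q + cnj (?Q p q)"
    using pc qc qp isotropic[OF p] isotropic[OF q] by (simp add: Qform_add_left Qform_add_right)
  hence re: "?Q p q + cnj (?Q p q) = 0" using isotropic[OF add[OF p q]] by simp
  have "?Q (p + \<i> \<cdot>\<^sub>v q) (p + \<i> \<cdot>\<^sub>v q) = \<i> * (cnj (?Q p q) - ?Q p q)"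
    using pc qc qp isotropic[OF p] isotropic[OF q]
    by (simp add: Qform_add_left Qform_add_right Qform_smult_left Qform_smult_right algebra_simps)
  hence im: "cnj (?Q p q) - ?Q p q = 0" using isotropic[OF add[OF p smult_i[OF q]]] by simp
  have "?Q p q + ?Q p q = 0" using re im by simp
  thus ?thesis by simp
qed


section \<open>The Gram matrix and the radical\<close>

definition gram_coeff :: "real \<Rightarrow> complex" where
  "gram_coeff \<alpha> = 1 / (1 + zeta \<alpha>)"

lemma gramQ_eq:
  "gramQ \<alpha> i i = 1"
  "j < i \<Longrightarrow> gramQ \<alpha> i j = gram_coeff \<alpha>"
  "i < j \<Longrightarrow> gramQ \<alpha> i j = cnj (gram_coeff \<alpha>)"
  unfolding gramQ_def gram_coeff_def by auto

lemma one_plus_zeta_nonzero: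
  assumes "0 < \<alpha>" "\<alpha> < 1/2"
  shows "1 + zeta \<alpha> \<noteq> 0"
proof
  assume "1 + zeta \<alpha> = 0"
  hence "Im (1 + zeta \<alpha>) = 0" by simp
  hence "Im (zeta \<alpha>) = 0" by simp
  moreover have "Im (zeta \<alpha>) = - sin (2 * pi * \<alpha>)"
    unfolding zeta_def by (simp add: Im_exp)
  moreover have "sin (2 * pi * \<alpha>) > 0" using assms by (intro sin_gt_zero) auto
  ultimately show False by simp
qed

lemma gram_coeff_add_cnj:
  assumes "1 + zeta \<alpha> \<noteq> 0"
  shows "gram_coeff \<alpha> + cnj (gram_coeff \<alpha>) = 1"
proof -
  let ?z = "zeta \<alpha>"
  have z0: "?z \<noteq> 0" unfolding zeta_def by simp
  have "cmod ?z = 1" unfolding zeta_def by (simp add: norm_exp_eq_Re)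
  hence "cnj ?z * ?z = 1" using complex_norm_square[of ?z] by (simp add: mult.commute)
  hence "1 + cnj ?z = (?z + 1) / ?z" using z0 by (simp add: field_simps)
  hence "cnj (gram_coeff \<alpha>) = 1 / ((?z + 1) / ?z)" unfolding gram_coeff_def by simp
  hence "cnj (gram_coeff \<alpha>) = ?z / (1 + ?z)" by (simp add: add.commute)
  thus ?thesis unfolding gram_coeff_def using assms by (simp add: field_simps)
qed

text \<open>Consecutive columns of the Gram matrix differ only in two entries, which turns
  the kernel equations into the recursion \<open>c x\<^sub>j = c\<^sup>* x\<^sub>j\<^sub>+\<^sub>1\<close>.\<close>

lemma Qform_unit_vec_consecutive:
  assumes "1 + zeta \<alpha> \<noteq> 0" and x: "x \<in> carrier_vec d" and j: "Suc j < d"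
  shows "Qform d \<alpha> x (unit_vec d j) - Qform d \<alpha> x (unit_vec d (Suc j))
       = gram_coeff \<alpha> * x $ j - cnj (gram_coeff \<alpha>) * x $ Suc j"
proof -
  let ?c = "gram_coeff \<alpha>"
  have c: "cnj ?c = 1 - ?c"
    using gram_coeff_add_cnj[OF assms(1)] by (metis add_diff_cancel_left')
  have col: "x $ i * gramQ \<alpha> i j - x $ i * gramQ \<alpha> i (Suc j)
      = (if i = j then ?c * x $ i else 0) - (if i = Suc j then cnj ?c * x $ i else 0)" for i
  proof -
    consider "i < j" | "i = j" | "i = Suc j" | "Suc j < i" by linarith
    thus ?thesis
      by cases (auto simp: gramQ_eq c algebra_simps)
  qed
  have "Qform d \<alpha> x (unit_vec d j) - Qform d \<alpha> x (unit_vec d (Suc j))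
      = (\<Sum>i<d. x $ i * gramQ \<alpha> i j - x $ i * gramQ \<alpha> i (Suc j))"
    using x j by (simp add: Qform_unit_vec_right sum_subtractf)
  also have "\<dots> = ?c * x $ j - cnj ?c * x $ Suc j"
    unfolding col sum_subtractf using j by simp
  finally show ?thesis .
qed

lemma kerQ_coord0_eq_0:
  assumes "1 + zeta \<alpha> \<noteq> 0" and x: "x \<in> kerQ d \<alpha>" and x0: "x $ 0 = 0"
  shows "x = 0\<^sub>v d"
proof -
  have xc: "x \<in> carrier_vec d" using x unfolding kerQ_def by auto
  have c: "cnj (gram_coeff \<alpha>) \<noteq> 0"
  proof
    assume "cnj (gram_coeff \<alpha>) = 0"
    thus False using gram_coeff_add_cnj[OF assms(1)] by simp
  qed
  have "x $ j = 0" if "j < d" for j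
    using that
  proof (induction j)
    case 0 thus ?case using x0 by simp
  next
    case (Suc j)
    have "gram_coeff \<alpha> * x $ j - cnj (gram_coeff \<alpha>) * x $ Suc j = 0"
      using Qform_unit_vec_consecutive[OF assms(1) xc Suc.prems] x Suc.prems
      unfolding kerQ_def by simp
    thus ?case using Suc c by simp
  qed
  thus ?thesis using xc by (intro eq_vecI) auto
qed

text \<open>The matrix determinant lemma \<open>det (1 + a b\<^sup>T) = 1 + b\<^sup>T a\<close>, via the block matrix
  \<open>X = [1, a; -b\<^sup>T, 1]\<close> whose determinant can be computed by eliminating either off-diagonal block.\<close>

lemma det_one_plus_rank_one:
  fixes a b :: "'a :: idom vec"
  assumes a: "a \<in> carrier_vec n" and b: "b \<in> carrier_vec n"
  shows "det (1\<^sub>m n + mat n n (\<lambda>(i,j). a $ i * b $ j)) = 1 + b \<bullet> a"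
proof -
  define A where "A = mat n 1 (\<lambda>(i,j). a $ i)"
  define B where "B = mat 1 n (\<lambda>(i,j). b $ j)"
  have A: "A \<in> carrier_mat n 1" and B: "B \<in> carrier_mat 1 n" unfolding A_def B_def by auto
  define X where "X = four_block_mat (1\<^sub>m n) A (- B) (1\<^sub>m 1)"
  define U where "U = four_block_mat (1\<^sub>m n) (- A) (0\<^sub>m 1 n) (1\<^sub>m 1)"
  define L where "L = four_block_mat (1\<^sub>m n) (0\<^sub>m n 1) B (1\<^sub>m 1)"
  have X: "X \<in> carrier_mat (n+1) (n+1)" and U: "U \<in> carrier_mat (n+1) (n+1)"
    and L: "L \<in> carrier_mat (n+1) (n+1)"
    unfolding X_def U_def L_def using A B by (auto intro!: four_block_carrier_mat)
  have BA: "B * A = mat 1 1 (\<lambda>_. b \<bullet> a)" and AB: "A * B = mat n n (\<lambda>(i,j). a $ i * b $ j)"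
    unfolding A_def B_def using a b by (auto intro!: eq_matI simp: scalar_prod_def)
  have blocks: "1\<^sub>m n \<in> carrier_mat n n" "1\<^sub>m 1 \<in> carrier_mat 1 1" "0\<^sub>m 1 n \<in> carrier_mat 1 n"
    "0\<^sub>m n 1 \<in> carrier_mat n 1" "- A \<in> carrier_mat n 1" "- B \<in> carrier_mat 1 n"
    using A B by auto
  have XU: "X * U = four_block_mat (1\<^sub>m n) (0\<^sub>m n 1) (- B) (1\<^sub>m 1 + B * A)"
    unfolding X_def U_def using A B blocks by (subst mult_four_block_mat) auto
  have "det (X * U) = det (1\<^sub>m 1 + B * A)"
    unfolding XU by (subst det_four_block_mat_upper_right_zero[of _ n _ 1]) (use A B in auto)
  also have "\<dots> = 1 + b \<bullet> a" unfolding BA by (subst det_single) auto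
  finally have "det (X * U) = 1 + b \<bullet> a" .
  moreover have "det U = 1"
    unfolding U_def by (subst det_four_block_mat_lower_left_zero[of _ n _ 1]) (use A in auto)
  ultimately have 1: "det X = 1 + b \<bullet> a" using det_mult[OF X U] by simp
  have XL: "X * L = four_block_mat (1\<^sub>m n + A * B) A (0\<^sub>m 1 n) (1\<^sub>m 1)"
    unfolding X_def L_def using A B blocks by (subst mult_four_block_mat) auto
  have "det (X * L) = det (1\<^sub>m n + A * B)"
    unfolding XL by (subst det_four_block_mat_lower_left_zero[of _ n _ 1]) (use A B in auto)
  moreover have "det L = 1"
    unfolding L_def by (subst det_four_block_mat_upper_right_zero[of _ n _ 1]) (use B in auto)
  ultimately have "det X = det (1\<^sub>m n + A * B)" using det_mult[OF X L] by simp
  thus ?thesis using 1 AB by simp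
qed

lemma eq_mat_by_mult_vec:
  fixes A B :: "'a :: comm_ring_1 mat"
  assumes "A \<in> carrier_mat n n" "B \<in> carrier_mat n n"
    and "\<And>x. x \<in> carrier_vec n \<Longrightarrow> A *\<^sub>v x = B *\<^sub>v x"
  shows "A = B"
proof (rule eq_matI)
  fix i j assume "i < dim_row B" "j < dim_col B"
  hence ij: "i < n" "j < n" using assms by auto
  have "(M *\<^sub>v unit_vec n j) $ i = M $$ (i, j)" if "M \<in> carrier_mat n n" for M :: "'a mat"
    using that ij by simp
  hence "A $$ (i, j) = (A *\<^sub>v unit_vec n j) $ i" "B $$ (i, j) = (B *\<^sub>v unit_vec n j) $ i"
    using assms(1,2) by auto
  thus "A $$ (i, j) = B $$ (i, j)" using assms(3)[of "unit_vec n j"] by simp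
qed (use assms in auto)

lemma add_zero_smult_vec [simp]:
  "v \<in> carrier_vec n \<Longrightarrow> w \<in> carrier_vec n \<Longrightarrow> v + (0 :: 'a :: comm_ring_1) \<cdot>\<^sub>v w = v"
  by (intro eq_vecI) auto

lemma det_nonzero_obtain_inverse:
  fixes A :: "'a :: field mat"
  assumes "A \<in> carrier_mat n n" "det A \<noteq> 0"
  obtains B where "B \<in> carrier_mat n n" "B * A = 1\<^sub>m n" "A * B = 1\<^sub>m n"
  using det_non_zero_imp_unit[OF assms, of undefined] that
  unfolding Units_def ring_mat_def by auto

lemma homogeneous_2x3_nontrivial_solution:
  fixes s1 s2 s3 t1 t2 t3 :: complex
  obtains v0 v1 v2 where "v0 \<noteq> 0 \<or> v1 \<noteq> 0 \<or> v2 \<noteq> 0"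
    "s1 * v0 + s2 * v1 + s3 * v2 = 0" "t1 * v0 + t2 * v1 + t3 * v2 = 0"
proof -
  define r where "r i = (if i = 0 then vec 3 ((!) [s1,s2,s3]) else vec 3 ((!) [t1,t2,t3]))"
    for i :: nat
  define M where "M = mat\<^sub>r 3 3 (\<lambda>i. if i = 2 then 0\<^sub>v 3 else r i)"
  have Mc: "M \<in> carrier_mat 3 3" unfolding M_def by auto
  have "det M = 0" unfolding M_def by (rule det_row_0) (auto simp: r_def)
  then obtain v where v: "v \<in> carrier_vec 3" "v \<noteq> 0\<^sub>v 3" "M *\<^sub>v v = 0\<^sub>v 3"
    using det_0_iff_vec_prod_zero[OF Mc] by auto
  have "(M *\<^sub>v v) $ 0 = s1 * v $ 0 + s2 * v $ 1 + s3 * v $ 2"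
    "(M *\<^sub>v v) $ 1 = t1 * v $ 0 + t2 * v $ 1 + t3 * v $ 2"
    using v(1) unfolding M_def r_def by (simp_all add: scalar_prod_def numeral_3_eq_3 eval_nat_numeral)
  moreover have "v $ 0 \<noteq> 0 \<or> v $ 1 \<noteq> 0 \<or> v $ 2 \<noteq> 0"
  proof (rule ccontr)
    assume "\<not> ?thesis"
    hence "v = 0\<^sub>v 3" using v(1) by (intro eq_vecI) (auto simp: less_Suc_eq numeral_2_eq_2 numeral_3_eq_3)
    thus False using v(2) by simp
  qed
  ultimately show ?thesis using that v(3) by auto
qed

lemma hypH_carrier: "x \<in> hypH d \<Longrightarrow> x \<in> carrier_vec d"
  and hypH_coord0: "x \<in> hypH d \<Longrightarrow> x $ 0 = 0"
  unfolding hypH_def by auto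

lemma hypH_zero: "0 < d \<Longrightarrow> 0\<^sub>v d \<in> hypH d"
  and hypH_add: "0 < d \<Longrightarrow> x \<in> hypH d \<Longrightarrow> y \<in> hypH d \<Longrightarrow> x + y \<in> hypH d"
  and hypH_diff: "0 < d \<Longrightarrow> x \<in> hypH d \<Longrightarrow> y \<in> hypH d \<Longrightarrow> x - y \<in> hypH d"
  and hypH_smult: "0 < d \<Longrightarrow> x \<in> hypH d \<Longrightarrow> c \<cdot>\<^sub>v x \<in> hypH d"
  unfolding hypH_def by auto

lemma hypH_not_subset_span2:
  assumes d: "d \<ge> 4" and a: "a \<in> carrier_vec d" and b: "b \<in> carrier_vec d"
  shows "\<not> hypH d \<subseteq> {s \<cdot>\<^sub>v a + t \<cdot>\<^sub>v b | s t. True}"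
proof
  assume span: "hypH d \<subseteq> {s \<cdot>\<^sub>v a + t \<cdot>\<^sub>v b | s t. True}"
  have ex: "\<exists>s t. unit_vec d k = s \<cdot>\<^sub>v a + t \<cdot>\<^sub>v b" if "0 < k" "k < d" for k
  proof -
    have "unit_vec d k \<in> hypH d" unfolding hypH_def using that by auto
    thus ?thesis using span by blast
  qed
  obtain s1 t1 where u1: "unit_vec d 1 = s1 \<cdot>\<^sub>v a + t1 \<cdot>\<^sub>v b" using ex[of 1] d by auto
  obtain s2 t2 where u2: "unit_vec d 2 = s2 \<cdot>\<^sub>v a + t2 \<cdot>\<^sub>v b" using ex[of 2] d by auto
  obtain s3 t3 where u3: "unit_vec d 3 = s3 \<cdot>\<^sub>v a + t3 \<cdot>\<^sub>v b" using ex[of 3] d by auto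
  obtain v0 v1 v2 where v: "v0 \<noteq> 0 \<or> v1 \<noteq> 0 \<or> v2 \<noteq> 0"
    "s1 * v0 + s2 * v1 + s3 * v2 = 0" "t1 * v0 + t2 * v1 + t3 * v2 = 0"
    by (rule homogeneous_2x3_nontrivial_solution)
  have "v0 * unit_vec d 1 $ i + v1 * unit_vec d 2 $ i + v2 * unit_vec d 3 $ i
      = (s1 * v0 + s2 * v1 + s3 * v2) * a $ i + (t1 * v0 + t2 * v1 + t3 * v2) * b $ i"
    if "i < d" for i
    unfolding u1 u2 u3 using that a b by (simp add: algebra_simps)
  hence comb: "v0 * unit_vec d 1 $ i + v1 * unit_vec d 2 $ i + v2 * unit_vec d 3 $ i = 0"
    if "i < d" for i
    using that v(2,3) by simp
  have "v0 = 0" using comb[of 1] d by simp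
  moreover have "v1 = 0" using comb[of 2] d by simp
  moreover have "v2 = 0" using comb[of 3] d by simp
  ultimately show False using v(1) by simp
qed

lemma real_eq_unit_diff:
  assumes "\<bar>t\<bar> \<le> 2"
  shows "\<exists>\<omega> \<omega>'. cmod \<omega> = 1 \<and> cmod \<omega>' = 1 \<and> complex_of_real t = \<omega> - \<omega>'"
proof -
  define \<omega> where "\<omega> = Complex (t/2) (sqrt (1 - (t/2)\<^sup>2))"
  have "(t/2)\<^sup>2 \<le> 1" using assms abs_square_le_1[of "t/2"] by simp
  hence "cmod \<omega> = 1" "cmod (- cnj \<omega>) = 1" unfolding \<omega>_def cmod_def by simp_all
  moreover have "complex_of_real t = \<omega> - (- cnj \<omega>)" unfolding \<omega>_def by (simp add: complex_eq_iff)
  ultimately show ?thesis by blast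
qed

text \<open>An additive subgroup of \<open>\<complex>\<close> containing \<open>\<omega> - 1\<close> for every \<open>\<omega>\<close> on the unit circle contains
  every \<open>\<omega> - \<omega>'\<close>, hence the square \<open>[-2,2] + i[-2,2]\<close>, hence everything.\<close>

lemma additive_subgroup_unit_circle:
  fixes M :: "complex set"
  assumes zero: "0 \<in> M" and diff: "\<And>a b. a \<in> M \<Longrightarrow> b \<in> M \<Longrightarrow> a - b \<in> M"
    and circle: "\<And>\<omega>. cmod \<omega> = 1 \<Longrightarrow> \<omega> - 1 \<in> M"
  shows "z \<in> M"
proof -
  have add: "a + b \<in> M" if "a \<in> M" "b \<in> M" for a b
    using diff[OF that(1) diff[OF zero that(2)]] by simp
  have small: "of_real t \<in> M \<and> \<i> * of_real t \<in> M" if t: "\<bar>t\<bar> \<le> 2" for t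
  proof -
    obtain \<omega> \<omega>' where w: "cmod \<omega> = 1" "cmod \<omega>' = 1" "complex_of_real t = \<omega> - \<omega>'"
      using real_eq_unit_diff[OF t] by blast
    have "\<omega> - \<omega>' \<in> M" "\<i> * \<omega> - \<i> * \<omega>' \<in> M"
      using diff[OF circle circle, of \<omega> \<omega>'] diff[OF circle circle, of "\<i> * \<omega>" "\<i> * \<omega>'"] w
      by (simp_all add: norm_mult)
    thus ?thesis using w(3) by (simp add: right_diff_distrib)
  qed
  have nat_mult: "of_nat n * a \<in> M" if "a \<in> M" for n a
    by (induction n) (simp_all add: zero add[OF that] distrib_right)
  define n :: nat where "n = nat \<lceil>\<bar>Re z\<bar> + \<bar>Im z\<bar>\<rceil> + 1"
  have n: "real n > 0" "\<bar>Re z\<bar> \<le> real n" "\<bar>Im z\<bar> \<le> real n" unfolding n_def by linarith+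
  have "\<bar>Re z / real n\<bar> \<le> 2" "\<bar>Im z / real n\<bar> \<le> 2"
    using n by (simp_all add: abs_divide divide_le_eq)
  hence "of_real (Re z / real n) \<in> M" "\<i> * of_real (Im z / real n) \<in> M"
    using small by blast+
  hence mem: "of_nat n * of_real (Re z / real n) + of_nat n * (\<i> * of_real (Im z / real n)) \<in> M"
    by (intro add nat_mult)
  have "of_nat n * of_real (Re z / real n) + of_nat n * (\<i> * of_real (Im z / real n)) = z"
    using n by (simp add: complex_eq_iff)
  thus ?thesis using mem by simp
qed

lemma eventually_quadratic_nonzero:
  fixes A B C :: real
  assumes "C \<noteq> 0"
  shows "\<forall>\<^sub>F s in at_top. A + s * B + s\<^sup>2 * C \<noteq> 0"
proof -
  have "((\<lambda>s. A / s\<^sup>2 + B / s + C) \<longlongrightarrow> C) at_top" by real_asymp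
  hence "\<forall>\<^sub>F s in at_top. A / s\<^sup>2 + B / s + C \<noteq> 0" using assms by (rule tendsto_imp_eventually_ne)
  moreover have "\<forall>\<^sub>F s in at_top. (s::real) > 0" by (rule eventually_gt_at_top)
  ultimately show ?thesis
  proof eventually_elim
    case (elim s)
    have "A + s * B + s\<^sup>2 * C = s\<^sup>2 * (A / s\<^sup>2 + B / s + C)"
      using elim(2) by (simp add: field_simps power2_eq_square)
    thus ?case using elim by simp
  qed
qed

lemma eventually_linear_nonzero:
  fixes \<beta> \<gamma> :: complex
  assumes "\<beta> \<noteq> 0 \<or> \<gamma> \<noteq> 0"
  shows "\<forall>\<^sub>F s in at_top. \<beta> + of_real s * \<gamma> \<noteq> 0"
proof (cases "\<gamma> = 0")
  case True
  thus ?thesis using assms by simp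
next
  case False
  have "\<forall>\<^sub>F s in at_top. cmod \<beta> / cmod \<gamma> < s" by (rule eventually_gt_at_top)
  thus ?thesis
  proof eventually_elim
    case (elim s)
    have "0 \<le> cmod \<beta> / cmod \<gamma>" by simp
    hence "0 < s" using elim by linarith
    moreover have "cmod \<beta> < s * cmod \<gamma>" using elim False by (simp add: divide_less_eq)
    ultimately have "cmod \<beta> < cmod (of_real s * \<gamma>)" by (simp add: norm_mult)
    thus ?case by (metis add_eq_0_iff norm_minus_cancel less_irrefl)
  qed
qed


section \<open>Forms with a radical line\<close>

locale radical_line =
  fixes d :: nat and \<alpha> :: real and e :: "complex vec"
  assumes d_ge_4: "d \<ge> 4" and zeta_ne: "1 + zeta \<alpha> \<noteq> 0"
    and e_carrier: "e \<in> carrier_vec d" and e_nonzero: "e \<noteq> 0\<^sub>v d"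
    and kerQ_eq: "kerQ d \<alpha> = {c \<cdot>\<^sub>v e | c. True}"
begin

abbreviation "Q \<equiv> Qform d \<alpha>"
abbreviation "H \<equiv> hypH d"
abbreviation "S \<equiv> SUstar d \<alpha> e"
abbreviation "D \<equiv> Dgrp d \<alpha> e"
abbreviation "SG \<equiv> SUstar_group d \<alpha> e"

lemma d_pos: "0 < d"
  using d_ge_4 by simp

lemma Qform_e_left [simp]: "y \<in> carrier_vec d \<Longrightarrow> Q e y = 0"
proof -
  assume y: "y \<in> carrier_vec d"
  have "e \<in> kerQ d \<alpha>" using kerQ_eq by (metis (mono_tags, lifting) mem_Collect_eq one_smult_vec)
  thus ?thesis using y unfolding kerQ_def by auto
qed

lemma Qform_e_right [simp]: "y \<in> carrier_vec d \<Longrightarrow> Q y e = 0"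
  using Qform_e_left[of y] Qform_swap[of d \<alpha> y e] by simp

lemma e_coord0_nonzero: "e $ 0 \<noteq> 0"
  using kerQ_coord0_eq_0[OF zeta_ne, of e d] e_carrier e_nonzero unfolding kerQ_def by auto

lemma radical_eq_multiple_e:
  assumes "x \<in> carrier_vec d" "\<And>y. y \<in> carrier_vec d \<Longrightarrow> Q x y = 0"
  obtains c where "x = c \<cdot>\<^sub>v e"
  using assms kerQ_eq unfolding kerQ_def by blast

definition proj_H :: "complex vec \<Rightarrow> complex vec" where
  "proj_H x = x - (x $ 0 / e $ 0) \<cdot>\<^sub>v e"

lemma proj_H_in_H: "x \<in> carrier_vec d \<Longrightarrow> proj_H x \<in> H"
  unfolding proj_H_def hypH_def using e_carrier e_coord0_nonzero d_pos by auto

lemma Qform_proj_H_right: "x \<in> carrier_vec d \<Longrightarrow> y \<in> carrier_vec d \<Longrightarrow> Q y (proj_H x) = Q y x"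
  unfolding proj_H_def using e_carrier by (simp add: Qform_diff_right Qform_smult_right)

text \<open>Since the radical meets \<open>H\<close> only in \<open>0\<close>, the form is nondegenerate on \<open>H\<close>.\<close>

lemma Qform_nondegenerate_H:
  assumes y: "y \<in> H" and orth: "\<And>h. h \<in> H \<Longrightarrow> Q y h = 0"
  shows "y = 0\<^sub>v d"
proof -
  have yc: "y \<in> carrier_vec d" using y hypH_carrier by auto
  have "Q y x = 0" if "x \<in> carrier_vec d" for x
    using orth[OF proj_H_in_H[OF that]] Qform_proj_H_right[OF that yc] by simp
  then obtain c where c: "y = c \<cdot>\<^sub>v e" using radical_eq_multiple_e yc by blast
  hence "c * e $ 0 = 0" using hypH_coord0[OF y] e_carrier d_pos by auto
  hence "c = 0" using e_coord0_nonzero by simp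
  thus ?thesis using c e_carrier by auto
qed

lemma Qform_nondegenerate_H':
  assumes y: "y \<in> H" and orth: "\<And>h. h \<in> H \<Longrightarrow> Q h y = 0"
  shows "y = 0\<^sub>v d"
  using Qform_nondegenerate_H[OF y] orth Qform_swap[of d \<alpha> y] by fastforce

subsection \<open>Transvections\<close>

definition transvection :: "complex vec \<Rightarrow> complex vec \<Rightarrow> complex mat" where
  "transvection a y = 1\<^sub>m d + mat d d (\<lambda>(i,j). a $ i * Q (unit_vec d j) y)"

lemma transvection_carrier [simp]: "transvection a y \<in> carrier_mat d d"
  unfolding transvection_def by auto

lemma transvection_mult_vec:
  assumes a: "a \<in> carrier_vec d" and x: "x \<in> carrier_vec d"
  shows "transvection a y *\<^sub>v x = x + Q x y \<cdot>\<^sub>v a"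
proof -
  have "mat d d (\<lambda>(i,j). a $ i * Q (unit_vec d j) y) *\<^sub>v x = Q x y \<cdot>\<^sub>v a"
  proof (rule eq_vecI)
    fix i assume "i < dim_vec (Q x y \<cdot>\<^sub>v a)"
    hence i: "i < d" using a by simp
    have "(mat d d (\<lambda>(i,j). a $ i * Q (unit_vec d j) y) *\<^sub>v x) $ i
       = a $ i * (\<Sum>j<d. x $ j * Q (unit_vec d j) y)"
      using i x by (simp add: scalar_prod_def sum_distrib_left atLeast0LessThan mult.commute mult.left_commute)
    thus "(mat d d (\<lambda>(i,j). a $ i * Q (unit_vec d j) y) *\<^sub>v x) $ i = (Q x y \<cdot>\<^sub>v a) $ i"
      using i a Qform_expand_left[OF x] by (simp add: mult.commute)
  qed (use a in auto)
  thus ?thesis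
    unfolding transvection_def using x by (simp add: add_mult_distrib_mat_vec[of _ d d])
qed

lemma det_transvection:
  assumes a: "a \<in> carrier_vec d"
  shows "det (transvection a y) = 1 + Q a y"
proof -
  define b where "b = vec d (\<lambda>j. Q (unit_vec d j) y)"
  have b: "b \<in> carrier_vec d" unfolding b_def by auto
  have "transvection a y = 1\<^sub>m d + mat d d (\<lambda>(i,j). a $ i * b $ j)"
    unfolding transvection_def b_def by (intro arg_cong2[where f = "(+)"] refl eq_matI) auto
  hence "det (transvection a y) = 1 + b \<bullet> a" using det_one_plus_rank_one[OF a b] by simp
  also have "b \<bullet> a = Q a y"
    unfolding Qform_expand_left[OF a] using a
    by (simp add: b_def scalar_prod_def atLeast0LessThan mult.commute)
  finally show ?thesis .
qed

definition eichler :: "complex vec \<Rightarrow> complex mat" where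
  "eichler y = transvection e y"

lemma eichler_carrier [simp]: "eichler y \<in> carrier_mat d d"
  unfolding eichler_def by simp

lemma eichler_mult_vec: "x \<in> carrier_vec d \<Longrightarrow> eichler y *\<^sub>v x = x + Q x y \<cdot>\<^sub>v e"
  unfolding eichler_def using transvection_mult_vec e_carrier by simp

lemma eichler_in_SUstar:
  assumes "y \<in> carrier_vec d"
  shows "eichler y \<in> S"
proof -
  have "det (eichler y) = 1"
    unfolding eichler_def using det_transvection e_carrier assms by simp
  moreover have "Q (eichler y *\<^sub>v x) (eichler y *\<^sub>v x') = Q x x'"
    if "x \<in> carrier_vec d" "x' \<in> carrier_vec d" for x x'
    using that e_carrier
    by (simp add: eichler_mult_vec Qform_add_left Qform_add_right Qform_smult_left Qform_smult_right)
  moreover have "eichler y *\<^sub>v e = e"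
    using e_carrier assms by (simp add: eichler_mult_vec)
  ultimately show ?thesis unfolding SUstar_def by auto
qed

lemma eichler_cong:
  assumes "\<And>x. x \<in> carrier_vec d \<Longrightarrow> Q x y = Q x z"
  shows "eichler y = eichler z"
  by (rule eq_mat_by_mult_vec[of _ d]) (auto simp: eichler_mult_vec assms)

lemma eichler_zero: "eichler (0\<^sub>v d) = 1\<^sub>m d"
  by (rule eq_mat_by_mult_vec[of _ d]) (auto simp: eichler_mult_vec e_carrier)

lemma eichler_proj_H: "y \<in> carrier_vec d \<Longrightarrow> eichler (proj_H y) = eichler y"
  by (rule eichler_cong) (simp add: Qform_proj_H_right)

lemma eichler_add:
  assumes y: "y \<in> carrier_vec d" and z: "z \<in> carrier_vec d"
  shows "eichler y * eichler z = eichler (y + z)"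
proof (rule eq_mat_by_mult_vec[of _ d])
  fix x :: "complex vec" assume x: "x \<in> carrier_vec d"
  have "(eichler y * eichler z) *\<^sub>v x = eichler y *\<^sub>v (eichler z *\<^sub>v x)"
    using x by (simp add: assoc_mult_mat_vec[of _ d d _ d])
  also have "\<dots> = x + Q x (y + z) \<cdot>\<^sub>v e"
    using x y z e_carrier
    by (simp add: eichler_mult_vec Qform_add_left Qform_add_right Qform_smult_left)
      (intro eq_vecI, auto simp: algebra_simps)
  finally show "(eichler y * eichler z) *\<^sub>v x = eichler (y + z) *\<^sub>v x"
    using x by (simp add: eichler_mult_vec)
qed (use y z mult_carrier_mat[OF eichler_carrier eichler_carrier] in auto)

lemma eichler_conj:
  assumes k: "k \<in> S" and y: "y \<in> carrier_vec d"
  shows "k * eichler y = eichler (k *\<^sub>v y) * k"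
proof -
  have kc: "k \<in> carrier_mat d d" and ke: "k *\<^sub>v e = e"
    and kQ: "\<And>x. x \<in> carrier_vec d \<Longrightarrow> Q (k *\<^sub>v x) (k *\<^sub>v y) = Q x y"
    using k y unfolding SUstar_def by auto
  show ?thesis
  proof (rule eq_mat_by_mult_vec[of _ d])
    fix x :: "complex vec" assume x: "x \<in> carrier_vec d"
    have "(k * eichler y) *\<^sub>v x = k *\<^sub>v x + Q x y \<cdot>\<^sub>v e"
      using x kc ke e_carrier
      by (simp add: assoc_mult_mat_vec[of _ d d _ d] eichler_mult_vec mult_add_distrib_mat_vec[of _ d d]
          mult_mat_vec[of _ d d])
    also have "\<dots> = (eichler (k *\<^sub>v y) * k) *\<^sub>v x"
      using x kc kQ[OF x] by (simp add: assoc_mult_mat_vec[of _ d d _ d] eichler_mult_vec)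
    finally show "(k * eichler y) *\<^sub>v x = (eichler (k *\<^sub>v y) * k) *\<^sub>v x" .
  qed (use kc in \<open>auto intro!: mult_carrier_mat[of _ d d _ d]\<close>)
qed

text \<open>Complex reflections: \<open>u\<close> is scaled by \<open>\<omega>\<close>, its \<open>Q\<close>-orthogonal complement is fixed.\<close>

definition qrefl :: "complex vec \<Rightarrow> complex \<Rightarrow> complex mat" where
  "qrefl u \<omega> = transvection (((\<omega> - 1) / Q u u) \<cdot>\<^sub>v u) u"

lemma qrefl_carrier [simp]: "qrefl u \<omega> \<in> carrier_mat d d"
  unfolding qrefl_def by simp

lemma qrefl_mult_vec:
  assumes "u \<in> carrier_vec d" "x \<in> carrier_vec d"
  shows "qrefl u \<omega> *\<^sub>v x = x + ((\<omega> - 1) / Q u u * Q x u) \<cdot>\<^sub>v u"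
  unfolding qrefl_def using assms by (simp add: transvection_mult_vec smult_smult_assoc mult.commute)

lemma det_qrefl:
  assumes "u \<in> carrier_vec d" "Q u u \<noteq> 0"
  shows "det (qrefl u \<omega>) = \<omega>"
  unfolding qrefl_def using assms by (simp add: det_transvection Qform_smult_left)

lemma qrefl_preserves_Qform:
  assumes u: "u \<in> carrier_vec d" and q: "Q u u \<noteq> 0" and \<omega>: "cmod \<omega> = 1"
    and x: "x \<in> carrier_vec d" and y: "y \<in> carrier_vec d"
  shows "Q (qrefl u \<omega> *\<^sub>v x) (qrefl u \<omega> *\<^sub>v y) = Q x y"
proof -
  define c where "c = (\<omega> - 1) / Q u u"
  have qr: "cnj (Q u u) = Q u u" by (rule cnj_Qform_self)
  have "(cnj c + c + c * cnj c * Q u u) * Q u u = (cnj \<omega> - 1) + (\<omega> - 1) + (\<omega> - 1) * (cnj \<omega> - 1)"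
    unfolding c_def using q qr by (simp add: field_simps)
  also have "\<dots> = \<omega> * cnj \<omega> - 1" by (simp add: algebra_simps)
  also have "\<dots> = 0" using \<omega> complex_norm_square[of \<omega>] by simp
  finally have unitary: "cnj c + c + c * cnj c * Q u u = 0" using q by simp
  have "Q (qrefl u \<omega> *\<^sub>v x) (qrefl u \<omega> *\<^sub>v y) = Q (x + (c * Q x u) \<cdot>\<^sub>v u) (y + (c * Q y u) \<cdot>\<^sub>v u)"
    using qrefl_mult_vec[OF u x] qrefl_mult_vec[OF u y] unfolding c_def by simp
  also have "\<dots> = Q x y + Q x u * Q u y * (cnj c + c + c * cnj c * Q u u)"
    using u x y Qform_swap[of d \<alpha> y u]
    by (simp add: Qform_add_left Qform_add_right Qform_smult_left Qform_smult_right algebra_simps)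
  finally show ?thesis using unitary by simp
qed

lemma qrefl_pair_mult_vec:
  assumes u: "u \<in> carrier_vec d" and v: "v \<in> carrier_vec d" and uv: "Q v u = 0"
    and x: "x \<in> carrier_vec d"
  shows "(qrefl u \<omega> * qrefl v \<omega>') *\<^sub>v x
    = x + ((\<omega> - 1) / Q u u * Q x u) \<cdot>\<^sub>v u + ((\<omega>' - 1) / Q v v * Q x v) \<cdot>\<^sub>v v"
proof -
  have "(qrefl u \<omega> * qrefl v \<omega>') *\<^sub>v x = qrefl u \<omega> *\<^sub>v (x + ((\<omega>' - 1) / Q v v * Q x v) \<cdot>\<^sub>v v)"
    using x v by (simp add: assoc_mult_mat_vec[of _ d d _ d] qrefl_mult_vec)
  also have "\<dots> = (x + ((\<omega>' - 1) / Q v v * Q x v) \<cdot>\<^sub>v v) + ((\<omega> - 1) / Q u u * Q x u) \<cdot>\<^sub>v u"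
    using u v x uv by (simp add: qrefl_mult_vec Qform_add_left Qform_smult_left)
  also have "\<dots> = x + ((\<omega> - 1) / Q u u * Q x u) \<cdot>\<^sub>v u + ((\<omega>' - 1) / Q v v * Q x v) \<cdot>\<^sub>v v"
    using u v x by (intro eq_vecI) auto
  finally show ?thesis .
qed

lemma qrefl_maps_H:
  assumes u: "u \<in> H" and x: "x \<in> H"
  shows "qrefl u \<omega> *\<^sub>v x \<in> H"
proof -
  have uc: "u \<in> carrier_vec d" and xc: "x \<in> carrier_vec d" using u x hypH_carrier by auto
  show ?thesis
    using qrefl_mult_vec[OF uc xc] hypH_coord0[OF u] hypH_coord0[OF x] uc xc d_pos
    unfolding hypH_def by simp
qed

text \<open>A single complex reflection has determinant \<open>\<omega>\<close>; the pairing makes it \<open>\<omega> \<omega>\<^sup>* = 1\<close>.\<close>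

lemma qrefl_pair_in_D:
  assumes u: "u \<in> H" and qu: "Q u u \<noteq> 0" and v: "v \<in> H" and qv: "Q v v \<noteq> 0"
    and \<omega>: "cmod \<omega> = 1"
  shows "qrefl u \<omega> * qrefl v (cnj \<omega>) \<in> D"
proof -
  have uc: "u \<in> carrier_vec d" and vc: "v \<in> carrier_vec d" using u v hypH_carrier by auto
  let ?k = "qrefl u \<omega> * qrefl v (cnj \<omega>)"
  have kv: "?k *\<^sub>v x = qrefl u \<omega> *\<^sub>v (qrefl v (cnj \<omega>) *\<^sub>v x)" if "x \<in> carrier_vec d" for x
    using that by (simp add: assoc_mult_mat_vec[of _ d d _ d])
  have "det ?k = 1"
    using det_mult[OF qrefl_carrier qrefl_carrier] det_qrefl[OF uc qu] det_qrefl[OF vc qv]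
      \<omega> complex_norm_square[of \<omega>] by simp
  moreover have "Q (?k *\<^sub>v x) (?k *\<^sub>v y) = Q x y" if "x \<in> carrier_vec d" "y \<in> carrier_vec d" for x y
    using that kv qrefl_preserves_Qform[OF uc qu \<omega>] qrefl_preserves_Qform[OF vc qv, of "cnj \<omega>"] \<omega>
    by (simp add: mult_mat_vec_carrier[OF qrefl_carrier])
  moreover have "?k *\<^sub>v e = e" using kv[OF e_carrier] uc vc e_carrier by (simp add: qrefl_mult_vec)
  moreover have "?k *\<^sub>v x \<in> H" if "x \<in> H" for x
    using kv[OF hypH_carrier[OF that]] qrefl_maps_H[OF u] qrefl_maps_H[OF v] that by simp
  ultimately show ?thesis unfolding Dgrp_def SUstar_def using mult_carrier_mat[OF qrefl_carrier qrefl_carrier] by auto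
qed

lemma SUstarD:
  assumes "g \<in> S"
  shows "g \<in> carrier_mat d d" "det g = 1" "g *\<^sub>v e = e"
    "\<And>x y. x \<in> carrier_vec d \<Longrightarrow> y \<in> carrier_vec d \<Longrightarrow> Q (g *\<^sub>v x) (g *\<^sub>v y) = Q x y"
  using assms unfolding SUstar_def by auto

lemma SUstar_mult:
  assumes g: "g \<in> S" and h: "h \<in> S"
  shows "g * h \<in> S"
proof -
  note g' = SUstarD[OF g] and h' = SUstarD[OF h]
  have "det (g * h) = 1" using det_mult[OF g'(1) h'(1)] g'(2) h'(2) by simp
  moreover have "Q ((g * h) *\<^sub>v x) ((g * h) *\<^sub>v y) = Q x y"
    if "x \<in> carrier_vec d" "y \<in> carrier_vec d" for x y
    using that g'(1) h'(1) g'(4)[of "h *\<^sub>v x" "h *\<^sub>v y"] h'(4)[of x y] by simp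
  moreover have "(g * h) *\<^sub>v e = e" using g'(1,3) h'(1,3) e_carrier by simp
  ultimately show ?thesis unfolding SUstar_def using g'(1) h'(1) by auto
qed

lemma one_in_SUstar: "1\<^sub>m d \<in> S"
  unfolding SUstar_def using e_carrier by auto

lemma SUstar_inverse:
  assumes g: "g \<in> S"
  shows "\<exists>g' \<in> S. g' * g = 1\<^sub>m d"
proof -
  note g' = SUstarD[OF g]
  obtain h where h: "h \<in> carrier_mat d d" "h * g = 1\<^sub>m d" "g * h = 1\<^sub>m d"
    using det_nonzero_obtain_inverse[OF g'(1)] g'(2) by auto
  have hg: "h *\<^sub>v (g *\<^sub>v x) = x" "g *\<^sub>v (h *\<^sub>v x) = x" if "x \<in> carrier_vec d" for x
    using that h g'(1) by (simp_all add: assoc_mult_mat_vec[symmetric, of _ d d _ d])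
  have "det h = 1" using det_mult[OF g'(1) h(1)] h(3) g'(2) by simp
  moreover have "Q (h *\<^sub>v x) (h *\<^sub>v y) = Q x y" if "x \<in> carrier_vec d" "y \<in> carrier_vec d" for x y
    using that g'(4)[of "h *\<^sub>v x" "h *\<^sub>v y"] hg(2) h(1) by simp
  moreover have "h *\<^sub>v e = e" using hg(1)[OF e_carrier] g'(3) by simp
  ultimately show ?thesis unfolding SUstar_def using h by auto
qed

lemma group_SUstar: "group SG"
proof (rule groupI)
  show "x \<otimes>\<^bsub>SG\<^esub> y \<in> carrier SG" if "x \<in> carrier SG" "y \<in> carrier SG" for x y
    using that SUstar_mult unfolding SUstar_group_def by simp
  show "\<one>\<^bsub>SG\<^esub> \<in> carrier SG" unfolding SUstar_group_def using one_in_SUstar by simp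
  show "x \<otimes>\<^bsub>SG\<^esub> y \<otimes>\<^bsub>SG\<^esub> z = x \<otimes>\<^bsub>SG\<^esub> (y \<otimes>\<^bsub>SG\<^esub> z)"
    if "x \<in> carrier SG" "y \<in> carrier SG" "z \<in> carrier SG" for x y z
    using that SUstarD(1) unfolding SUstar_group_def by (simp add: assoc_mult_mat[of _ d d _ d _ d])
  show "\<one>\<^bsub>SG\<^esub> \<otimes>\<^bsub>SG\<^esub> x = x" if "x \<in> carrier SG" for x
    using that SUstarD(1)[of x] unfolding SUstar_group_def by simp
  show "\<exists>y\<in>carrier SG. y \<otimes>\<^bsub>SG\<^esub> x = \<one>\<^bsub>SG\<^esub>" if "x \<in> carrier SG" for x
    using that SUstar_inverse unfolding SUstar_group_def by simp
qed

lemma SUstar_group_simps: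
  "carrier SG = S" "x \<otimes>\<^bsub>SG\<^esub> y = x * y" "\<one>\<^bsub>SG\<^esub> = 1\<^sub>m d"
  unfolding SUstar_group_def by auto

subsection \<open>Decomposition of \<open>SU\<^sup>*(Q)\<close>\<close>

text \<open>The Gram matrix of \<open>Q\<close> on \<open>H\<close>, completed by the identity in the first coordinate;
  it is invertible because \<open>Q\<close> is nondegenerate on \<open>H\<close>.\<close>

definition gramH :: "complex mat" where
  "gramH = mat d d (\<lambda>(i,j). if i = 0 \<or> j = 0 then (if i = j then 1 else 0) else gramQ \<alpha> i j)"

lemma gramH_carrier: "gramH \<in> carrier_mat d d"
  unfolding gramH_def by auto

lemma gramH_mult_vec_coord0:
  assumes "w \<in> carrier_vec d"
  shows "(gramH *\<^sub>v w) $ 0 = w $ 0"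
proof -
  have "(gramH *\<^sub>v w) $ 0 = (\<Sum>j\<in>{0..<d}. (if j = 0 then 1 else 0) * w $ j)"
    using assms d_pos unfolding gramH_def by (simp add: scalar_prod_def)
  also have "\<dots> = (\<Sum>j\<in>{0..<d}. if j = 0 then w $ j else 0)"
    by (intro sum.cong) auto
  also have "\<dots> = w $ 0" using d_pos by simp
  finally show ?thesis .
qed

lemma Qform_cnj_vec_gramH:
  assumes x: "x \<in> H" and w: "w \<in> carrier_vec d" and w0: "w $ 0 = 0"
  shows "Q x (vec d (\<lambda>j. cnj (w $ j))) = (\<Sum>i<d. x $ i * (gramH *\<^sub>v w) $ i)"
  unfolding Qform_cnj_vec_right
proof (intro sum.cong refl)
  fix i assume "i \<in> {..<d}"
  hence i: "i < d" by simp
  show "x $ i * (\<Sum>j<d. gramQ \<alpha> i j * w $ j) = x $ i * (gramH *\<^sub>v w) $ i"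
  proof (cases "i = 0")
    case True thus ?thesis using hypH_coord0[OF x] by simp
  next
    case False
    have "(gramH *\<^sub>v w) $ i = (\<Sum>j\<in>{0..<d}. (if j = 0 then 0 else gramQ \<alpha> i j) * w $ j)"
      using w i False unfolding gramH_def by (simp add: scalar_prod_def) (intro sum.cong, auto)
    also have "\<dots> = (\<Sum>j<d. gramQ \<alpha> i j * w $ j)"
      unfolding atLeast0LessThan by (intro sum.cong refl) (simp add: w0)
    finally show ?thesis by simp
  qed
qed

lemma cnj_vec_in_H: "w $ 0 = 0 \<Longrightarrow> vec d (\<lambda>j. cnj (w $ j)) \<in> H"
  unfolding hypH_def using d_pos by auto

lemma det_gramH_nonzero: "det gramH \<noteq> 0"
proof
  assume "det gramH = 0"
  then obtain w where w: "w \<in> carrier_vec d" "w \<noteq> 0\<^sub>v d" "gramH *\<^sub>v w = 0\<^sub>v d"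
    using det_0_iff_vec_prod_zero[OF gramH_carrier] by auto
  have w0: "w $ 0 = 0" using gramH_mult_vec_coord0[OF w(1)] w(3) d_pos by simp
  have "Q x (vec d (\<lambda>j. cnj (w $ j))) = 0" if "x \<in> H" for x
    using Qform_cnj_vec_gramH[OF that w(1) w0] w(3) by simp
  hence "vec d (\<lambda>j. cnj (w $ j)) = 0\<^sub>v d"
    using Qform_nondegenerate_H'[OF cnj_vec_in_H[OF w0]] by blast
  hence "w = 0\<^sub>v d" using w(1) by (intro eq_vecI) (auto simp: vec_eq_iff)
  thus False using w(2) by simp
qed

lemma functional_on_H_represented:
  assumes \<phi>: "\<phi> \<in> carrier_vec d"
  obtains z where "z \<in> H" "\<And>x. x \<in> H \<Longrightarrow> Q x z = (\<Sum>i<d. x $ i * \<phi> $ i)"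
proof -
  obtain B where B: "B \<in> carrier_mat d d" "gramH * B = 1\<^sub>m d"
    using det_nonzero_obtain_inverse[OF gramH_carrier det_gramH_nonzero] by metis
  define \<psi> where "\<psi> = vec d (\<lambda>i. if i = 0 then 0 else \<phi> $ i)"
  define w where "w = B *\<^sub>v \<psi>"
  have w: "w \<in> carrier_vec d" unfolding w_def \<psi>_def using B by auto
  have gw: "gramH *\<^sub>v w = \<psi>" unfolding w_def using B gramH_carrier
    by (simp add: assoc_mult_mat_vec[symmetric, of _ d d _ d] \<psi>_def)
  have w0: "w $ 0 = 0" using gramH_mult_vec_coord0[OF w] gw d_pos unfolding \<psi>_def by simp
  have "Q x (vec d (\<lambda>j. cnj (w $ j))) = (\<Sum>i<d. x $ i * \<phi> $ i)" if x: "x \<in> H" for x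
    unfolding Qform_cnj_vec_gramH[OF x w w0] gw \<psi>_def
    using hypH_coord0[OF x] by (intro sum.cong refl) auto
  thus ?thesis using that cnj_vec_in_H[OF w0] by blast
qed

text \<open>Choose \<open>y\<close> so that the correction \<open>Q(x, g\<^sup>-\<^sup>1 y) e\<close> cancels the first coordinate of \<open>g x\<close>
  for \<open>x \<in> H\<close>.\<close>

lemma exists_eichler_mult_in_D:
  assumes g: "g \<in> S"
  obtains y where "y \<in> carrier_vec d" "eichler y * g \<in> D"
proof -
  note g' = SUstarD[OF g]
  define \<phi> where "\<phi> = vec d (\<lambda>i. - g $$ (0, i) / e $ 0)"
  obtain z where z: "z \<in> H" "\<And>x. x \<in> H \<Longrightarrow> Q x z = (\<Sum>i<d. x $ i * \<phi> $ i)"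
    using functional_on_H_represented[of \<phi>] unfolding \<phi>_def by auto
  have zc: "z \<in> carrier_vec d" using z(1) hypH_carrier by auto
  define y where "y = g *\<^sub>v z"
  have yc: "y \<in> carrier_vec d" unfolding y_def using g'(1) zc by auto
  have "(eichler y * g) *\<^sub>v x \<in> H" if x: "x \<in> H" for x
  proof -
    have xc: "x \<in> carrier_vec d" using x hypH_carrier by auto
    have eq: "(eichler y * g) *\<^sub>v x = g *\<^sub>v x + Q x z \<cdot>\<^sub>v e"
      using xc g'(1) zc g'(4)[OF xc zc]
      by (simp add: assoc_mult_mat_vec[of _ d d _ d] eichler_mult_vec y_def)
    have "Q x z * e $ 0 = (\<Sum>i<d. - (g $$ (0, i) * x $ i))"
      unfolding z(2)[OF x] sum_distrib_right by (intro sum.cong refl) (simp add: \<phi>_def e_coord0_nonzero)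
    moreover have "(g *\<^sub>v x) $ 0 = (\<Sum>i<d. g $$ (0, i) * x $ i)"
      using g'(1) xc d_pos by (simp add: scalar_prod_def atLeast0LessThan)
    ultimately have "((eichler y * g) *\<^sub>v x) $ 0 = 0"
      unfolding eq using g'(1) xc e_carrier d_pos by (simp add: sum_negf)
    thus ?thesis unfolding hypH_def using g'(1) xc by (simp add: eq e_carrier)
  qed
  thus ?thesis using that yc SUstar_mult[OF eichler_in_SUstar[OF yc] g] unfolding Dgrp_def by auto
qed

subsection \<open>Anisotropic vectors in \<open>H\<close>\<close>

lemma orthogonal_decomposition:
  assumes w1: "w1 \<in> H" and w2: "w2 \<in> H" and w12: "Q w1 w2 = 0"
    and ok1: "w1 = 0\<^sub>v d \<or> Q w1 w1 \<noteq> 0" and ok2: "w2 = 0\<^sub>v d \<or> Q w2 w2 \<noteq> 0"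
    and h: "h \<in> H"
  obtains p s t where "p \<in> H" "Q p w1 = 0" "Q p w2 = 0" "h = p + s \<cdot>\<^sub>v w1 + t \<cdot>\<^sub>v w2"
proof -
  have w1c: "w1 \<in> carrier_vec d" and w2c: "w2 \<in> carrier_vec d" and hc: "h \<in> carrier_vec d"
    using w1 w2 h hypH_carrier by auto
  have w21: "Q w2 w1 = 0" using w12 Qform_swap[of d \<alpha> w2 w1] by simp
  define s where "s = Q h w1 / Q w1 w1"
  define t where "t = Q h w2 / Q w2 w2"
  define p where "p = h - s \<cdot>\<^sub>v w1 - t \<cdot>\<^sub>v w2"
  have "p \<in> H" unfolding p_def using h w1 w2 d_pos by (intro hypH_diff hypH_smult)
  moreover have "Q p w1 = Q h w1 - s * Q w1 w1" "Q p w2 = Q h w2 - t * Q w2 w2"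
    unfolding p_def using hc w1c w2c w12 w21 by (simp_all add: Qform_diff_left Qform_smult_left)
  hence "Q p w1 = 0" "Q p w2 = 0"
    unfolding s_def t_def using ok1 ok2 by auto
  moreover have "h = p + s \<cdot>\<^sub>v w1 + t \<cdot>\<^sub>v w2"
    unfolding p_def using hc w1c w2c by (intro eq_vecI) auto
  ultimately show ?thesis using that by blast
qed

text \<open>Since \<open>dim H \<ge> 3\<close>, the orthogonal complement of two orthogonal vectors of \<open>H\<close> is a nonzero
  subspace on which \<open>Q\<close> is nondegenerate; by polarization it contains an anisotropic vector.\<close>

lemma exists_anisotropic_orthogonal:
  assumes w1: "w1 \<in> H" and w2: "w2 \<in> H" and w12: "Q w1 w2 = 0"
    and ok1: "w1 = 0\<^sub>v d \<or> Q w1 w1 \<noteq> 0" and ok2: "w2 = 0\<^sub>v d \<or> Q w2 w2 \<noteq> 0"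
  obtains w where "w \<in> H" "Q w w \<noteq> 0" "Q w w1 = 0" "Q w w2 = 0"
proof -
  have w1c: "w1 \<in> carrier_vec d" and w2c: "w2 \<in> carrier_vec d" using w1 w2 hypH_carrier by auto
  define V where "V = {p \<in> H. Q p w1 = 0 \<and> Q p w2 = 0}"
  have "\<exists>w \<in> V. Q w w \<noteq> 0"
  proof (rule ccontr)
    assume "\<not> ?thesis"
    hence iso: "Q p p' = 0" if "p \<in> V" "p' \<in> V" for p p'
    proof (intro Qform_totally_isotropic[of V d _ p p'] that)
      show "V \<subseteq> carrier_vec d" unfolding V_def using hypH_carrier by auto
      show "v + v' \<in> V" if "v \<in> V" "v' \<in> V" for v v'
        using that hypH_carrier d_pos unfolding V_def by (auto intro: hypH_add simp: Qform_add_left)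
      show "\<i> \<cdot>\<^sub>v v \<in> V" if "v \<in> V" for v
        using that hypH_carrier d_pos unfolding V_def by (auto intro: hypH_smult simp: Qform_smult_left)
    qed blast
    have "h \<in> {s \<cdot>\<^sub>v w1 + t \<cdot>\<^sub>v w2 | s t. True}" if h: "h \<in> H" for h
    proof -
      obtain p s t where p: "p \<in> H" "Q p w1 = 0" "Q p w2 = 0" "h = p + s \<cdot>\<^sub>v w1 + t \<cdot>\<^sub>v w2"
        using orthogonal_decomposition[OF w1 w2 w12 ok1 ok2 h] by blast
      have pc: "p \<in> carrier_vec d" using p(1) hypH_carrier by auto
      have "Q p h' = 0" if h': "h' \<in> H" for h'
      proof -
        obtain p' s' t' where p': "p' \<in> H" "Q p' w1 = 0" "Q p' w2 = 0" "h' = p' + s' \<cdot>\<^sub>v w1 + t' \<cdot>\<^sub>v w2"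
          using orthogonal_decomposition[OF w1 w2 w12 ok1 ok2 h'] by blast
        have "Q p p' = 0" using iso p p' unfolding V_def by blast
        thus ?thesis unfolding p'(4) using p p'(1) hypH_carrier[of p'] w1c w2c
          by (simp add: Qform_add_right Qform_smult_right)
      qed
      hence "p = 0\<^sub>v d" by (rule Qform_nondegenerate_H[OF p(1)])
      thus ?thesis using p(4) w1c w2c by auto
    qed
    thus False using hypH_not_subset_span2[OF d_ge_4 w1c w2c] by blast
  qed
  thus ?thesis using that unfolding V_def by blast
qed

lemma exists_anisotropic_orthogonal_pair:
  assumes v: "v \<in> H" "Q v v \<noteq> 0"
  obtains w' w'' where "w' \<in> H" "Q w' w' \<noteq> 0" "w'' \<in> H" "Q w'' w'' \<noteq> 0"
    "Q w' v = 0" "Q w'' v = 0" "Q w'' w' = 0"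
proof -
  obtain w' where w': "w' \<in> H" "Q w' w' \<noteq> 0" "Q w' v = 0"
    by (rule exists_anisotropic_orthogonal[OF v(1) hypH_zero[OF d_pos]]) (use v(2) in auto)
  have vw': "Q v w' = 0" using w'(3) Qform_swap[of d \<alpha> v w'] by simp
  obtain w'' where "w'' \<in> H" "Q w'' w'' \<noteq> 0" "Q w'' v = 0" "Q w'' w' = 0"
    by (rule exists_anisotropic_orthogonal[OF v(1) w'(1) vw']) (use v(2) w'(2) in auto)
  thus ?thesis using that w' by blast
qed

lemma exists_real_shift_anisotropic:
  fixes \<beta> \<gamma> :: complex
  assumes u: "u \<in> carrier_vec d" and qu: "Q u u \<noteq> 0" and v: "v \<in> carrier_vec d"
    and \<beta>\<gamma>: "\<beta> \<noteq> 0 \<or> \<gamma> \<noteq> 0"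
  obtains s :: real where "Q (v + of_real s \<cdot>\<^sub>v u) (v + of_real s \<cdot>\<^sub>v u) \<noteq> 0" "\<beta> + of_real s * \<gamma> \<noteq> 0"
proof -
  have real: "z = of_real (Re z)" if "cnj z = z" for z
    using that by (simp add: complex_eq_iff)
  define A where "A = Re (Q v v)"
  define B where "B = Re (Q v u + Q u v)"
  define C where "C = Re (Q u u)"
  have hA: "Q v v = of_real A" and hC: "Q u u = of_real C"
    unfolding A_def C_def by (rule real[OF cnj_Qform_self])+
  have hB: "Q v u + Q u v = of_real B"
    unfolding B_def by (rule real) (simp add: Qform_swap[of d \<alpha> u v] add.commute)
  have quad: "Q (v + of_real s \<cdot>\<^sub>v u) (v + of_real s \<cdot>\<^sub>v u) = of_real (A + s * B + s\<^sup>2 * C)" for s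
  proof -
    let ?s = "complex_of_real s"
    have "Q (v + ?s \<cdot>\<^sub>v u) (v + ?s \<cdot>\<^sub>v u) = Q v v + cnj ?s * Q v u + (?s * Q u v + ?s * (cnj ?s * Q u u))"
      using u v by (simp add: Qform_add_left Qform_add_right Qform_smult_left Qform_smult_right distrib_left)
    also have "\<dots> = Q v v + ?s * (Q v u + Q u v) + ?s\<^sup>2 * Q u u"
      by (simp add: power2_eq_square distrib_left mult.assoc)
    finally show ?thesis unfolding hA hB hC by simp
  qed
  have "C \<noteq> 0" using qu hC by simp
  hence "\<forall>\<^sub>F s in at_top. A + s * B + s\<^sup>2 * C \<noteq> 0 \<and> \<beta> + of_real s * \<gamma> \<noteq> 0"
    by (intro eventually_conj eventually_quadratic_nonzero eventually_linear_nonzero[OF \<beta>\<gamma>])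
  hence "\<exists>s. A + s * B + s\<^sup>2 * C \<noteq> 0 \<and> \<beta> + of_real s * \<gamma> \<noteq> 0"
    by (rule eventually_happens'[OF trivial_limit_at_top_linorder])
  then obtain s where s: "A + s * B + s\<^sup>2 * C \<noteq> 0" "\<beta> + of_real s * \<gamma> \<noteq> 0"
    by blast
  have "Q (v + of_real s \<cdot>\<^sub>v u) (v + of_real s \<cdot>\<^sub>v u) \<noteq> 0"
    unfolding quad of_real_eq_0_iff using s(1) .
  thus ?thesis using s(2) by (rule that)
qed

end

section \<open>Subgroups containing \<open>D\<close>\<close>

locale overgroup = radical_line +
  fixes G :: "complex mat set"
  assumes subgroup_G: "subgroup G SG" and D_subset_G: "D \<subseteq> G"
begin

lemma G_subset_S: "G \<subseteq> S"
  using subgroup.subset[OF subgroup_G] by (simp add: SUstar_group_simps)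

lemma G_cancel_right:
  assumes a: "a \<in> S" and b: "b \<in> G" and ab: "a * b \<in> G"
  shows "a \<in> G"
proof -
  interpret SG: group SG by (rule group_SUstar)
  have a': "a \<in> carrier SG" and b': "b \<in> carrier SG"
    using a b G_subset_S by (auto simp: SUstar_group_simps)
  have "a = (a \<otimes>\<^bsub>SG\<^esub> b) \<otimes>\<^bsub>SG\<^esub> inv\<^bsub>SG\<^esub> b"
    using a' b' by (simp add: SG.m_assoc SG.r_inv)
  moreover have "(a \<otimes>\<^bsub>SG\<^esub> b) \<otimes>\<^bsub>SG\<^esub> inv\<^bsub>SG\<^esub> b \<in> G"
    using ab b subgroup.m_closed[OF subgroup_G] subgroup.m_inv_closed[OF subgroup_G]
    by (simp add: SUstar_group_simps)
  ultimately show ?thesis by simp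
qed

lemma G_cancel_left:
  assumes a: "a \<in> G" and b: "b \<in> S" and ab: "a * b \<in> G"
  shows "b \<in> G"
proof -
  interpret SG: group SG by (rule group_SUstar)
  have a': "a \<in> carrier SG" and b': "b \<in> carrier SG"
    using a b G_subset_S by (auto simp: SUstar_group_simps)
  have "b = inv\<^bsub>SG\<^esub> a \<otimes>\<^bsub>SG\<^esub> (a \<otimes>\<^bsub>SG\<^esub> b)"
    using a' b' by (simp add: SG.m_assoc[symmetric] SG.l_inv)
  moreover have "inv\<^bsub>SG\<^esub> a \<otimes>\<^bsub>SG\<^esub> (a \<otimes>\<^bsub>SG\<^esub> b) \<in> G"
    using ab a subgroup.m_closed[OF subgroup_G] subgroup.m_inv_closed[OF subgroup_G]
    by (simp add: SUstar_group_simps)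
  ultimately show ?thesis by simp
qed

definition eichler_vectors :: "complex vec set" where
  "eichler_vectors = {y \<in> carrier_vec d. eichler y \<in> G}"

lemma eichler_vectors_carrier: "y \<in> eichler_vectors \<Longrightarrow> y \<in> carrier_vec d"
  unfolding eichler_vectors_def by auto

lemma zero_in_eichler_vectors: "0\<^sub>v d \<in> eichler_vectors"
  using subgroup.one_closed[OF subgroup_G]
  by (simp add: eichler_vectors_def eichler_zero SUstar_group_simps)

lemma eichler_vectors_add:
  assumes y: "y \<in> eichler_vectors" and z: "z \<in> eichler_vectors"
  shows "y + z \<in> eichler_vectors"
proof -
  have yz: "y \<in> carrier_vec d" "z \<in> carrier_vec d" "eichler y \<in> G" "eichler z \<in> G"
    using y z unfolding eichler_vectors_def by auto
  have "eichler (y + z) \<in> G"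
    unfolding eichler_add[OF yz(1,2), symmetric]
    using subgroup.m_closed[OF subgroup_G yz(3,4)] by (simp add: SUstar_group_simps)
  thus ?thesis using yz unfolding eichler_vectors_def by simp
qed

lemma eichler_vectors_uminus:
  assumes y: "y \<in> eichler_vectors"
  shows "- y \<in> eichler_vectors"
proof -
  have yc: "y \<in> carrier_vec d" and Ny: "eichler y \<in> G" using y unfolding eichler_vectors_def by auto
  have "eichler (- y) * eichler y = eichler (0\<^sub>v d)" using eichler_add[of "- y" y] yc by simp
  hence "eichler (- y) * eichler y \<in> G"
    using zero_in_eichler_vectors unfolding eichler_vectors_def by simp
  hence "eichler (- y) \<in> G" using G_cancel_right eichler_in_SUstar Ny yc by simp
  thus ?thesis using yc unfolding eichler_vectors_def by simp
qed

lemma eichler_vectors_diff: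
  assumes "y \<in> eichler_vectors" "z \<in> eichler_vectors"
  shows "y - z \<in> eichler_vectors"
proof -
  have "y - z = y + - z" using assms eichler_vectors_carrier by auto
  thus ?thesis using assms eichler_vectors_add eichler_vectors_uminus by simp
qed

lemma eichler_vectors_D_diff:
  assumes k: "k \<in> D" and y: "y \<in> eichler_vectors"
  shows "k *\<^sub>v y - y \<in> eichler_vectors"
proof -
  have kS: "k \<in> S" and kG: "k \<in> G" using k D_subset_G unfolding Dgrp_def by auto
  have yc: "y \<in> carrier_vec d" and Ny: "eichler y \<in> G" using y unfolding eichler_vectors_def by auto
  have kyc: "k *\<^sub>v y \<in> carrier_vec d" using SUstarD(1)[OF kS] yc by simp
  have "eichler (k *\<^sub>v y) * k \<in> G"
    unfolding eichler_conj[OF kS yc, symmetric]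
    using kG Ny subgroup.m_closed[OF subgroup_G] by (simp add: SUstar_group_simps)
  hence "eichler (k *\<^sub>v y) \<in> G" using G_cancel_right eichler_in_SUstar[OF kyc] kG by blast
  hence "k *\<^sub>v y \<in> eichler_vectors" using kyc unfolding eichler_vectors_def by simp
  thus ?thesis using eichler_vectors_diff y by simp
qed

lemma eichler_vectors_smult:
  assumes v: "v \<in> carrier_vec d"
    and circle: "\<And>\<omega>. cmod \<omega> = 1 \<Longrightarrow> (\<omega> - 1) \<cdot>\<^sub>v v \<in> eichler_vectors"
  shows "c \<cdot>\<^sub>v v \<in> eichler_vectors"
proof -
  have "c \<in> {c. c \<cdot>\<^sub>v v \<in> eichler_vectors}"
  proof (rule additive_subgroup_unit_circle)
    have "0 \<cdot>\<^sub>v v = 0\<^sub>v d" using v by auto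
    thus "0 \<in> {c. c \<cdot>\<^sub>v v \<in> eichler_vectors}" using zero_in_eichler_vectors by simp
    show "a - b \<in> {c. c \<cdot>\<^sub>v v \<in> eichler_vectors}"
      if "a \<in> {c. c \<cdot>\<^sub>v v \<in> eichler_vectors}" "b \<in> {c. c \<cdot>\<^sub>v v \<in> eichler_vectors}" for a b
    proof -
      have "(a - b) \<cdot>\<^sub>v v = a \<cdot>\<^sub>v v - b \<cdot>\<^sub>v v" using v by (intro eq_vecI) (auto simp: algebra_simps)
      thus ?thesis using that eichler_vectors_diff by simp
    qed
  qed (use circle in simp)
  thus ?thesis by simp
qed

text \<open>The product of the reflections of order two in \<open>w\<close> and \<open>w'\<close> moves \<open>y\<close> by a vector \<open>z\<close>
  in the span of \<open>w\<close> and \<open>w'\<close>, which is therefore orthogonal to \<open>w''\<close>.\<close>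

lemma exists_eichler_vector_orthogonal:
  assumes y: "y \<in> eichler_vectors" and yw: "Q y w \<noteq> 0"
    and w: "w \<in> H" "Q w w \<noteq> 0" and w': "w' \<in> H" "Q w' w' \<noteq> 0" and w'w: "Q w' w = 0"
    and w'': "w'' \<in> H" "Q w'' w = 0" "Q w'' w' = 0"
  obtains z where "z \<in> eichler_vectors" "Q z w \<noteq> 0" "Q z w'' = 0"
proof -
  have wc: "w \<in> carrier_vec d" and w'c: "w' \<in> carrier_vec d" and w''c: "w'' \<in> carrier_vec d"
    using w w' w'' hypH_carrier by auto
  have yc: "y \<in> carrier_vec d" using y eichler_vectors_carrier by auto
  have ww'': "Q w w'' = 0" and w'w'': "Q w' w'' = 0"
    using w''(2,3) Qform_swap[of d \<alpha> w w''] Qform_swap[of d \<alpha> w' w''] by simp_all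
  define k where "k = qrefl w (-1) * qrefl w' (cnj (-1))"
  define z where "z = k *\<^sub>v y - y"
  have "k \<in> D" unfolding k_def by (rule qrefl_pair_in_D[OF w w']) simp
  hence zY: "z \<in> eichler_vectors" unfolding z_def using eichler_vectors_D_diff y by blast
  have z: "z = (-2 / Q w w * Q y w) \<cdot>\<^sub>v w + (-2 / Q w' w' * Q y w') \<cdot>\<^sub>v w'"
    unfolding z_def k_def qrefl_pair_mult_vec[OF wc w'c w'w yc]
    using yc wc w'c by (intro eq_vecI) auto
  have "Q z w = -2 * Q y w" unfolding z using wc w'c w'w w(2) by (simp add: Qform_add_left Qform_smult_left)
  moreover have "Q z w'' = 0" unfolding z using wc w'c ww'' w'w'' by (simp add: Qform_add_left Qform_smult_left)
  ultimately show ?thesis using that zY yw by simp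
qed

text \<open>The pair of reflections \<open>(w, \<omega>)\<close>, \<open>(w'', \<omega>\<^sup>*)\<close> moves \<open>z\<close> by \<open>(\<omega> - 1) Q(z,w)/Q(w,w) w\<close>.\<close>

lemma line_in_eichler_vectors_of_orthogonal:
  assumes z: "z \<in> eichler_vectors" and zw: "Q z w \<noteq> 0" and zw'': "Q z w'' = 0"
    and w: "w \<in> H" "Q w w \<noteq> 0" and w'': "w'' \<in> H" "Q w'' w'' \<noteq> 0" "Q w'' w = 0"
  shows "c \<cdot>\<^sub>v w \<in> eichler_vectors"
proof -
  have wc: "w \<in> carrier_vec d" and w''c: "w'' \<in> carrier_vec d" using w w'' hypH_carrier by auto
  have zc: "z \<in> carrier_vec d" using z eichler_vectors_carrier by auto
  define a where "a = Q z w / Q w w"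
  have "(\<omega> - 1) \<cdot>\<^sub>v (a \<cdot>\<^sub>v w) \<in> eichler_vectors" if \<omega>: "cmod \<omega> = 1" for \<omega>
  proof -
    define k where "k = qrefl w \<omega> * qrefl w'' (cnj \<omega>)"
    have "k \<in> D" unfolding k_def by (rule qrefl_pair_in_D[OF w w''(1,2) \<omega>])
    moreover have "k *\<^sub>v z - z = (\<omega> - 1) \<cdot>\<^sub>v (a \<cdot>\<^sub>v w)"
      unfolding k_def qrefl_pair_mult_vec[OF wc w''c w''(3) zc] zw'' a_def
      using zc wc w''c by (intro eq_vecI) (auto simp: field_simps)
    ultimately show ?thesis using eichler_vectors_D_diff z by metis
  qed
  hence all: "b \<cdot>\<^sub>v (a \<cdot>\<^sub>v w) \<in> eichler_vectors" for b
    using eichler_vectors_smult[of "a \<cdot>\<^sub>v w"] wc by simp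
  have "a \<noteq> 0" unfolding a_def using zw w(2) by simp
  hence "c \<cdot>\<^sub>v w = (c / a) \<cdot>\<^sub>v (a \<cdot>\<^sub>v w)" by (simp add: smult_smult_assoc)
  thus ?thesis using all by simp
qed

lemma line_in_eichler_vectors:
  assumes y: "y \<in> eichler_vectors" and w: "w \<in> H" "Q w w \<noteq> 0" and yw: "Q y w \<noteq> 0"
  shows "c \<cdot>\<^sub>v w \<in> eichler_vectors"
proof -
  obtain w' w'' where w': "w' \<in> H" "Q w' w' \<noteq> 0" and w'': "w'' \<in> H" "Q w'' w'' \<noteq> 0"
    and orth: "Q w' w = 0" "Q w'' w = 0" "Q w'' w' = 0"
    using exists_anisotropic_orthogonal_pair[OF w] by blast
  obtain z where "z \<in> eichler_vectors" "Q z w \<noteq> 0" "Q z w'' = 0"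
    using exists_eichler_vector_orthogonal[OF y yw w w' orth(1) w''(1) orth(2,3)] by blast
  thus ?thesis using line_in_eichler_vectors_of_orthogonal w w'' orth(2) by blast
qed

lemma anisotropic_perturbation:
  assumes u: "u \<in> H" "Q u u \<noteq> 0" and h: "h \<in> H" and x: "x \<in> carrier_vec d"
    and nz: "Q x h \<noteq> 0 \<or> Q x u \<noteq> 0"
  obtains s :: real where "h + of_real s \<cdot>\<^sub>v u \<in> H"
    "Q (h + of_real s \<cdot>\<^sub>v u) (h + of_real s \<cdot>\<^sub>v u) \<noteq> 0" "Q x (h + of_real s \<cdot>\<^sub>v u) \<noteq> 0"
proof -
  have uc: "u \<in> carrier_vec d" and hc: "h \<in> carrier_vec d" using u h hypH_carrier by auto
  obtain s :: real where s: "Q (h + of_real s \<cdot>\<^sub>v u) (h + of_real s \<cdot>\<^sub>v u) \<noteq> 0"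
    "Q x h + of_real s * Q x u \<noteq> 0"
    using exists_real_shift_anisotropic[OF uc u(2) hc nz] by blast
  have "Q x (h + of_real s \<cdot>\<^sub>v u) \<noteq> 0"
    using s(2) uc hc by (simp add: Qform_add_right Qform_smult_right)
  moreover have "h + of_real s \<cdot>\<^sub>v u \<in> H" using u h d_pos by (intro hypH_add hypH_smult)
  ultimately show ?thesis using that s(1) by blast
qed

lemma H_subset_eichler_vectors:
  assumes y: "y \<in> eichler_vectors" "y \<in> H" "y \<noteq> 0\<^sub>v d"
  shows "H \<subseteq> eichler_vectors"
proof
  fix v :: "complex vec" assume v: "v \<in> H"
  have yc: "y \<in> carrier_vec d" using y(2) hypH_carrier by auto
  obtain h where h: "h \<in> H" "Q y h \<noteq> 0" using Qform_nondegenerate_H[OF y(2)] y(3) by blast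
  obtain u where u: "u \<in> H" "Q u u \<noteq> 0"
    by (rule exists_anisotropic_orthogonal[OF hypH_zero[OF d_pos] hypH_zero[OF d_pos]]) auto
  obtain s where "h + of_real s \<cdot>\<^sub>v u \<in> H"
    "Q (h + of_real s \<cdot>\<^sub>v u) (h + of_real s \<cdot>\<^sub>v u) \<noteq> 0" "Q y (h + of_real s \<cdot>\<^sub>v u) \<noteq> 0"
    using anisotropic_perturbation[OF u h(1) yc] h(2) by blast
  then obtain w where w: "w \<in> H" "Q w w \<noteq> 0" "Q y w \<noteq> 0" by blast
  have wc: "w \<in> carrier_vec d" using w(1) hypH_carrier by auto
  have line_w: "c \<cdot>\<^sub>v w \<in> eichler_vectors" for c
    using line_in_eichler_vectors[OF y(1) w(1,2) w(3)] by blast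
  have wY: "w \<in> eichler_vectors" using line_w[of 1] wc by simp
  obtain t where v': "v + of_real t \<cdot>\<^sub>v w \<in> H"
    "Q (v + of_real t \<cdot>\<^sub>v w) (v + of_real t \<cdot>\<^sub>v w) \<noteq> 0" "Q w (v + of_real t \<cdot>\<^sub>v w) \<noteq> 0"
    using anisotropic_perturbation[OF w(1,2) v wc] w(2) by blast
  have "1 \<cdot>\<^sub>v (v + of_real t \<cdot>\<^sub>v w) \<in> eichler_vectors"
    using line_in_eichler_vectors[OF wY v'] by blast
  moreover have "v = 1 \<cdot>\<^sub>v (v + of_real t \<cdot>\<^sub>v w) - of_real t \<cdot>\<^sub>v w"
    using v wc hypH_carrier[OF v] by (intro eq_vecI) auto
  ultimately show "v \<in> eichler_vectors" using eichler_vectors_diff line_w by metis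
qed

lemma eichler_vector_in_H_if_G_ne_D:
  assumes "G \<noteq> D"
  obtains y where "y \<in> eichler_vectors" "y \<in> H" "y \<noteq> 0\<^sub>v d"
proof -
  obtain g where gG: "g \<in> G" and gD: "g \<notin> D" using assms D_subset_G by blast
  have gS: "g \<in> S" using gG G_subset_S by auto
  obtain y where yc: "y \<in> carrier_vec d" and yD: "eichler y * g \<in> D"
    using exists_eichler_mult_in_D[OF gS] by blast
  have "eichler y \<in> G" using G_cancel_right[OF eichler_in_SUstar[OF yc] gG] yD D_subset_G by blast
  hence "proj_H y \<in> eichler_vectors"
    using proj_H_in_H[OF yc] hypH_carrier by (simp add: eichler_vectors_def eichler_proj_H[OF yc])
  moreover have "proj_H y \<noteq> 0\<^sub>v d"
  proof
    assume "proj_H y = 0\<^sub>v d"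
    hence "eichler y = 1\<^sub>m d" using eichler_proj_H[OF yc] eichler_zero by simp
    thus False using yD gD SUstarD(1)[OF gS] by simp
  qed
  ultimately show ?thesis using that proj_H_in_H[OF yc] by blast
qed

lemma S_subset_G_if_all_eichler:
  assumes "carrier_vec d \<subseteq> eichler_vectors"
  shows "S \<subseteq> G"
proof
  fix g assume gS: "g \<in> S"
  obtain y where yc: "y \<in> carrier_vec d" and yD: "eichler y * g \<in> D"
    using exists_eichler_mult_in_D[OF gS] by blast
  have "eichler y \<in> G" using assms yc unfolding eichler_vectors_def by blast
  thus "g \<in> G" using G_cancel_left gS yD D_subset_G by blast
qed

lemma G_eq_D_or_S: "G = D \<or> G = S"
proof (cases "G = D")
  case False
  then obtain y where y: "y \<in> eichler_vectors" "y \<in> H" "y \<noteq> 0\<^sub>v d"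
    by (rule eichler_vector_in_H_if_G_ne_D)
  have "x \<in> eichler_vectors" if x: "x \<in> carrier_vec d" for x
  proof -
    have "proj_H x \<in> eichler_vectors" using H_subset_eichler_vectors[OF y] proj_H_in_H[OF x] by blast
    thus ?thesis using x by (simp add: eichler_vectors_def eichler_proj_H[OF x])
  qed
  hence "carrier_vec d \<subseteq> eichler_vectors" by blast
  thus ?thesis using S_subset_G_if_all_eichler G_subset_S by blast
qed simp

end

theorem mainTheorem7:
  fixes d :: nat and \<alpha> :: real and e :: "complex vec" and G :: "complex mat set"
  assumes "d \<ge> 4" and "0 < \<alpha>" and "\<alpha> < 1/2"
    and "real (d + 1) * \<alpha> \<in> \<int>"
    and "e \<in> carrier_vec d" and "e \<noteq> 0\<^sub>v d"
    and "kerQ d \<alpha> = {c \<cdot>\<^sub>v e | c. True}"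
    and "subgroup G (SUstar_group d \<alpha> e)"
    and "Dgrp d \<alpha> e \<subseteq> G"
  shows "G = Dgrp d \<alpha> e \<or> G = SUstar d \<alpha> e"
proof -
  have "overgroup d \<alpha> e G"
    using assms one_plus_zeta_nonzero[OF assms(2,3)]
    by (intro overgroup.intro radical_line.intro overgroup_axioms.intro) simp_all
  thus ?thesis by (rule overgroup.G_eq_D_or_S)
qed

end
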